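(* For any $\alpha,\beta\in\mathbb N$, $n\in\mathbb Z$ and $\epsilon\in\{0,1\}$: $M_{\alpha,n}M_{\beta,n+\epsilon}=\mathfrak q^{\min(\alpha,\beta)\epsilon}M_{\beta,n+\epsilon}M_{\alpha,n}$ in $U^>_q(L\mathfrak{sl}_2)$.
   Context: Let $q$ be a formal variable and $\mathfrak q=q^2$. $U^>_q(L\mathfrak{sl}_2)$ is the $\mathbb C(q)$-algebra generated by $e_r$ ($r\in\mathbb Z$) subject to $(z-q^2w)e(z)e(w)=(q^2z-w)e(w)e(z)$, $e(z)=\sum_re_rz^{-r}$. Set $M_{0,n}=1$, $M_{1,n}=e_{-n}$ and, for $k\ge1$, $M_{k,n}=\frac{(-1)^{k(k-1)/2}}{(1-\mathfrak q)^{k-1}}Y_k$ where $Y_1=M_{1,n-k+1}$, $Y_j=[Y_{j-1},M_{1,n-k+2j-1}]_{\mathfrak q^j}$ ($2\le j\le k$), $[x,y]_c=xy-c\,yx$. *)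

theory Defs
  imports Complex_Main "HOL-Computational_Algebra.Polynomial" "HOL-Computational_Algebra.Fraction_Field"
begin

type_synonym Cq = "complex poly fract"

definition qv :: Cq where "qv = Fract [:0, 1:] 1"

definition qq :: Cq where "qq = qv ^ 2"

definition Cq_algebra :: "(Cq \<Rightarrow> 'a::ring_1 \<Rightarrow> 'a) \<Rightarrow> bool" where
  "Cq_algebra sc \<longleftrightarrow> module sc \<and>
     (\<forall>a x y. sc a (x * y) = sc a x * y \<and> sc a (x * y) = x * sc a y)"

text \<open>Coefficientwise form of (z - q^2 w) e(z) e(w) = (q^2 z - w) e(w) e(z), with
  e(z) = sum_r e_r z^(-r): comparing coefficients of z^(-a) w^(-b).\<close>
definition loop_rel :: "(Cq \<Rightarrow> 'a::ring_1 \<Rightarrow> 'a) \<Rightarrow> (int \<Rightarrow> 'a) \<Rightarrow> bool" where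
  "loop_rel sc e \<longleftrightarrow> (\<forall>a b::int.
     e (a + 1) * e b - sc qq (e a * e (b + 1)) = sc qq (e b * e (a + 1)) - e (b + 1) * e a)"

definition qcomm :: "(Cq \<Rightarrow> 'a::ring_1 \<Rightarrow> 'a) \<Rightarrow> 'a \<Rightarrow> 'a \<Rightarrow> Cq \<Rightarrow> 'a" where
  "qcomm sc x y c = x * y - sc c (y * x)"

text \<open>Yc sc e k n i = Y_(i+1) in the definition of M_(k,n); M_(1,m) = e_(-m).\<close>
fun Yc :: "(Cq \<Rightarrow> 'a::ring_1 \<Rightarrow> 'a) \<Rightarrow> (int \<Rightarrow> 'a) \<Rightarrow> nat \<Rightarrow> int \<Rightarrow> nat \<Rightarrow> 'a" where
  "Yc sc e k n 0 = e (- (n - int k + 1))"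
| "Yc sc e k n (Suc i) =
     qcomm sc (Yc sc e k n i) (e (- (n - int k + 2 * int (i + 2) - 1))) (qq ^ (i + 2))"

definition M :: "(Cq \<Rightarrow> 'a::ring_1 \<Rightarrow> 'a) \<Rightarrow> (int \<Rightarrow> 'a) \<Rightarrow> nat \<Rightarrow> int \<Rightarrow> 'a" where
  "M sc e k n = (if k = 0 then 1
     else sc ((-1) ^ (k * (k - 1) div 2) / (1 - qq) ^ (k - 1)) (Yc sc e k n (k - 1)))"

end

theory Submission
  imports Defs
begin

text \<open>Write \<open>q\<close> for \<open>qq\<close> and \<open>E j\<close> for \<open>e\<^sub>-\<^sub>j\<close>. Up to a scalar, \<open>M\<^sub>k\<^sub>+\<^sub>1\<^sub>,\<^sub>n\<close> is the nested
  \<open>q\<close>-commutator \<open>Y k n\<close> of \<open>E (n - k), E (n - k + 2), \<dots>, E (n + k)\<close>. The defining relation at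
  neighbouring indices gives \<open>2 (E i E (i + 1) - q E (i + 1) E i) = 0\<close>, and 2 is invertible in
  \<open>\<complex>(q)\<close>. A joint induction on \<open>k\<close> shows that \<open>Y k n\<close> skew-commutes with \<open>E j\<close>, with factor
  \<open>q ^ (j - n)\<close>, whenever \<open>|j - n| \<le> k + 1\<close>, and that the nested commutator may equally be built
  from the left; in both steps the defining relation trades the product of two new boundary
  generators for a product of generators that the induction hypothesis already controls.
  Multiplying these factors, \<open>Y k n\<close> skew-commutes with every \<open>Y l m\<close> whose generators lie in
  that window, with factor \<open>q ^ ((l + 1) (m - n))\<close>; for \<open>m = n + \<epsilon>\<close> this is the claim.\<close>

lemma qv_nonzero: "qv \<noteq> 0"
  unfolding qv_def by (subst Zero_fract_def) (simp add: eq_fract)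

lemma qq_nonzero: "qq \<noteq> 0"
  unfolding qq_def using qv_nonzero by simp

lemma qq_powi_mult: "qq powi i * qq powi j = qq powi (i + j)"
  using power_int_add[of qq i j] qq_nonzero by simp

lemma two_Cq_nonzero: "(2::Cq) \<noteq> 0"
proof -
  have "(2::Cq) = Fract 2 1"
    using of_nat_fract[of 2] by simp
  moreover have "Fract (2::complex poly) 1 \<noteq> 0"
    by (subst Zero_fract_def) (simp add: eq_fract)
  ultimately show ?thesis
    by simp
qed

locale Cq_alg =
  fixes sc :: "Cq \<Rightarrow> 'a::ring_1 \<Rightarrow> 'a"
  assumes Cq_algebra: "Cq_algebra sc"
begin

sublocale module sc
  using Cq_algebra unfolding Cq_algebra_def by blast

lemma scale_mult_left [simp]: "sc a x * y = sc a (x * y)"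
  using Cq_algebra unfolding Cq_algebra_def by metis

lemma mult_scale_right [simp]: "x * sc a y = sc a (x * y)"
  using Cq_algebra unfolding Cq_algebra_def by metis

lemma double_eq_zero_imp_zero:
  assumes "x + x = (0::'a)"
  shows "x = 0"
proof -
  have "sc 2 x = 0"
    using assms scale_left_distrib[of 1 1 x] by simp
  then have "sc (inverse 2) (sc 2 x) = 0"
    by simp
  then show ?thesis
    using two_Cq_nonzero by simp
qed

lemma skew_commute_mult:
  assumes "X * u = sc c (u * X)" and "X * v = sc d (v * X)"
  shows "X * (u * v) = sc (c * d) (u * v * X)"
  using assms by (simp add: mult.assoc flip: mult.assoc[of X])

lemma skew_commute_qcomm:
  assumes "X * u = sc c (u * X)" and "X * v = sc d (v * X)"
  shows "X * qcomm sc u v t = sc (c * d) (qcomm sc u v t * X)"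
  using skew_commute_mult[OF assms] skew_commute_mult[OF assms(2,1)]
  unfolding qcomm_def
  by (simp add: right_diff_distrib left_diff_distrib scale_right_diff_distrib mult_ac)

lemma skew_commute_diff:
  assumes "X * u = sc c (u * X)" and "X * v = sc c (v * X)"
  shows "X * (u - sc t v) = sc c ((u - sc t v) * X)"
    and "X * (sc t u - v) = sc c ((sc t u - v) * X)"
  using assms
  by (simp_all add: right_diff_distrib left_diff_distrib scale_right_diff_distrib mult.commute)

lemma qcomm_skew_commute_right:
  assumes "p \<noteq> 0"
    and X_h: "X * h = sc d (h * X)"
    and X_rel: "X * (sc p (g * h) - h * g) = sc (a * d) ((sc p (g * h) - h * g) * X)"
    and d: "d = b * p"
  shows "qcomm sc X g a * h = sc b (h * qcomm sc X g a)"
proof -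
  have "g * (X * h) = sc d (g * (h * X))"
    by (simp add: X_h)
  moreover have "sc d (h * (X * g)) = X * (h * g)"
    using arg_cong[OF X_h, of "\<lambda>z. z * g"] by (simp add: mult.assoc)
  ultimately have "sc p (qcomm sc X g a * h) - sc d (h * qcomm sc X g a)
      = X * (sc p (g * h) - h * g) - sc (a * d) ((sc p (g * h) - h * g) * X)"
    unfolding qcomm_def by (simp add: algebra_simps)
  also have "\<dots> = 0"
    using X_rel by simp
  finally have "sc p (qcomm sc X g a * h) = sc p (sc b (h * qcomm sc X g a))"
    using d by (simp add: mult.commute)
  then have "sc (inverse p) (sc p (qcomm sc X g a * h))
      = sc (inverse p) (sc p (sc b (h * qcomm sc X g a)))"
    by simp
  then show ?thesis
    using \<open>p \<noteq> 0\<close> by (simp add: mult.assoc[symmetric])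
qed

lemma qcomm_skew_commute_left:
  assumes X_h: "X * h = sc d (h * X)"
    and X_rel: "sc a (X * (g * h - sc p (h * g))) = sc d ((g * h - sc p (h * g)) * X)"
    and b: "b = d * p"
  shows "qcomm sc g X a * h = sc b (h * qcomm sc g X a)"
proof -
  have X_hg: "sc d (h * (X * g)) = X * (h * g)"
    using arg_cong[OF X_h, of "\<lambda>z. z * g"] by (simp add: mult.assoc)
  have "qcomm sc g X a * h - sc b (h * qcomm sc g X a)
      = g * (X * h) - sc a (X * (g * h)) - sc p (sc d (h * (g * X)))
        + sc (a * p) (sc d (h * (X * g)))"
    unfolding qcomm_def b by (simp add: algebra_simps)
  also have "\<dots> = sc d ((g * h - sc p (h * g)) * X) - sc a (X * (g * h - sc p (h * g)))"
    unfolding X_hg by (simp add: X_h algebra_simps)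
  also have "\<dots> = 0"
    using X_rel by simp
  finally show ?thesis
    by simp
qed

lemma qcomm_assoc:
  assumes "Z * (a * c - sc p (c * a)) = (a * c - sc p (c * a)) * Z"
  shows "qcomm sc (qcomm sc a Z s) c (s * p) = qcomm sc a (qcomm sc Z c s) (s * p)"
proof -
  have "qcomm sc (qcomm sc a Z s) c (s * p) - qcomm sc a (qcomm sc Z c s) (s * p)
      = sc s ((a * c - sc p (c * a)) * Z - Z * (a * c - sc p (c * a)))"
    unfolding qcomm_def by (simp add: algebra_simps)
  then show ?thesis
    using assms by simp
qed

end

locale loop_algebra = Cq_alg sc for sc :: "Cq \<Rightarrow> 'a::ring_1 \<Rightarrow> 'a" +
  fixes e :: "int \<Rightarrow> 'a"
  assumes loop_rel: "loop_rel sc e"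
begin

definition E :: "int \<Rightarrow> 'a" where
  "E j = e (- j)"

lemma E_exchange:
  "E i * E j - sc qq (E j * E i) = sc qq (E (i + 1) * E (j - 1)) - E (j - 1) * E (i + 1)"
proof -
  have rel: "e (- i - 1 + 1) * e (- j) - sc qq (e (- i - 1) * e (- j + 1))
      = sc qq (e (- j) * e (- i - 1 + 1)) - e (- j + 1) * e (- i - 1)"
    using loop_rel unfolding loop_rel_def by blast
  have "- i - 1 + 1 = - i" and "- i - 1 = - (i + 1)" and "- j + 1 = - (j - 1)"
    by simp_all
  then have "E i * E j - sc qq (E (i + 1) * E (j - 1)) = sc qq (E j * E i) - E (j - 1) * E (i + 1)"
    using rel unfolding E_def by metis
  then show ?thesis
    by (simp add: algebra_simps)
qed

lemma E_adjacent: "E i * E (i + 1) = sc qq (E (i + 1) * E i)"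
proof -
  define x where "x = E i * E (i + 1) - sc qq (E (i + 1) * E i)"
  have "x = sc qq (E (i + 1) * E i) - E i * E (i + 1)"
    using E_exchange[of i "i + 1"] unfolding x_def by simp
  then have "x = - x"
    unfolding x_def by (simp only: minus_diff_eq)
  then have "x + x = 0"
    by (metis add.right_inverse)
  then have "x = 0"
    by (rule double_eq_zero_imp_zero)
  then show ?thesis
    unfolding x_def by simp
qed

lemma E_skew_commute_near:
  assumes "\<bar>j - n\<bar> \<le> 1"
  shows "E n * E j = sc (qq powi (j - n)) (E j * E n)"
proof -
  consider "j = n" | "j = n + 1" | "j = n - 1"
    using assms by linarith
  then show ?thesis
  proof cases
    case 3
    have "E (n - 1) * E n = sc qq (E n * E (n - 1))"
      using E_adjacent[of "n - 1"] by simp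
    then have "sc (inverse qq) (E (n - 1) * E n) = E n * E (n - 1)"
      using qq_nonzero by simp
    then show ?thesis
      unfolding 3 by (simp add: power_int_minus)
  qed (simp_all add: E_adjacent)
qed

text \<open>\<open>Y l m\<close> is \<open>Y\<^sub>l\<^sub>+\<^sub>1\<close> of the definition of \<open>M\<close>, indexed by its centre \<open>m\<close>: the nested
  commutator of \<open>E (m - l), E (m - l + 2), \<dots>, E (m + l)\<close>.\<close>

fun Y :: "nat \<Rightarrow> int \<Rightarrow> 'a" where
  "Y 0 m = E m"
| "Y (Suc l) m = qcomm sc (Y l (m - 1)) (E (m + int l + 1)) (qq ^ (l + 2))"

lemma Yc_eq_Y: "Yc sc e k n i = Y i (n - int k + int i + 1)"
proof (induction i)
  case 0
  then show ?case
    by (simp add: E_def)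
next
  case (Suc i)
  have "n - int k + int (Suc i) + 1 - 1 = n - int k + int i + 1"
    and "- (n - int k + 2 * int (i + 2) - 1) = - (n - int k + int (Suc i) + 1 + int i + 1)"
    by simp_all
  then show ?case
    by (simp only: Yc.simps Y.simps Suc E_def)
qed

lemma M_Suc_eq_scale_Y: "M sc e (Suc k) n = sc ((-1) ^ (Suc k * k div 2) / (1 - qq) ^ k) (Y k n)"
  by (simp add: M_def Yc_eq_Y)

context
  fixes l :: nat
  assumes Y_l_skew_commute_E:
      "\<And>n j. \<bar>j - n\<bar> \<le> int l + 1 \<Longrightarrow> Y l n * E j = sc (qq powi (j - n)) (E j * Y l n)"
    and Y_l_Suc_left: "\<And>n. Y (Suc l) n = qcomm sc (E (n - int l - 1)) (Y l (n + 1)) (qq ^ (l + 2))"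
begin

lemma Y_Suc_Suc_left:
  "Y (Suc (Suc l)) n = qcomm sc (E (n - int (Suc l) - 1)) (Y (Suc l) (n + 1)) (qq ^ (Suc l + 2))"
proof -
  define a where "a = E (n - int l - 2)"
  define c where "c = E (n + int l + 2)"
  have Z_inner: "Y l n * E (n - int l - 1) = sc (qq powi (- int l - 1)) (E (n - int l - 1) * Y l n)"
    using Y_l_skew_commute_E[of "n - int l - 1" n] by simp
  have Z_outer: "Y l n * E (n + int l + 1) = sc (qq powi (int l + 1)) (E (n + int l + 1) * Y l n)"
    using Y_l_skew_commute_E[of "n + int l + 1" n] by simp
  have "qq powi (- int l - 1) * qq powi (int l + 1) = 1"
    using qq_powi_mult[of "- int l - 1" "int l + 1"] by simp
  then have "Y l n * (E (n - int l - 1) * E (n + int l + 1))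
        = E (n - int l - 1) * E (n + int l + 1) * Y l n"
    and "Y l n * (E (n + int l + 1) * E (n - int l - 1))
        = E (n + int l + 1) * E (n - int l - 1) * Y l n"
    using skew_commute_mult[OF Z_inner Z_outer] skew_commute_mult[OF Z_outer Z_inner]
    by (simp_all add: mult.commute)
  moreover have "a * c - sc qq (c * a)
      = sc qq (E (n - int l - 1) * E (n + int l + 1)) - E (n + int l + 1) * E (n - int l - 1)"
    using E_exchange[of "n - int l - 2" "n + int l + 2"] unfolding a_def c_def
    by (simp add: algebra_simps)
  ultimately have Z_commute: "Y l n * (a * c - sc qq (c * a)) = (a * c - sc qq (c * a)) * Y l n"
    by (simp add: right_diff_distrib left_diff_distrib mult.assoc)
  have idx: "n - 1 - int l - 1 = n - int l - 2" "n - 1 + 1 = n" "n + int (Suc l) + 1 = n + int l + 2"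
    "n - int (Suc l) - 1 = n - int l - 2" "n + 1 - 1 = n" "n + 1 + int l + 1 = n + int l + 2"
    "qq ^ (Suc l + 2) = qq ^ (l + 2) * qq"
    by simp_all
  have "Y (Suc (Suc l)) n = qcomm sc (qcomm sc a (Y l n) (qq ^ (l + 2))) c (qq ^ (l + 2) * qq)"
    unfolding Y.simps(2)[of "Suc l" n] Y_l_Suc_left[of "n - 1"] idx a_def c_def ..
  also have "\<dots> = qcomm sc a (qcomm sc (Y l n) c (qq ^ (l + 2))) (qq ^ (l + 2) * qq)"
    by (rule qcomm_assoc[OF Z_commute])
  also have "\<dots> = qcomm sc (E (n - int (Suc l) - 1)) (Y (Suc l) (n + 1)) (qq ^ (Suc l + 2))"
    unfolding Y.simps(2)[of l "n + 1"] idx a_def c_def ..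
  finally show ?thesis .
qed

lemma Y_Suc_skew_commute_E_right:
  assumes "n - int l - 2 \<le> j" and "j \<le> n + int l"
  shows "Y (Suc l) n * E j = sc (qq powi (j - n)) (E j * Y (Suc l) n)"
proof -
  define X where "X = Y l (n - 1)"
  define g where "g = E (n + int l + 1)"
  have X_E: "X * E i = sc (qq powi (i - (n - 1))) (E i * X)" if "n - int l - 2 \<le> i" "i \<le> n + int l" for i
    unfolding X_def using that by (intro Y_l_skew_commute_E) simp
  have X_rel: "X * (sc qq (g * E j) - E j * g)
      = sc (qq ^ (l + 2) * qq powi (j - (n - 1))) ((sc qq (g * E j) - E j * g) * X)"
  proof (cases "j = n + int l")
    case True
    have "sc qq (g * E j) - E j * g = 0"
      unfolding g_def True using E_adjacent[of "n + int l"] by (simp add: add.assoc)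
    then show ?thesis
      by simp
  next
    case False
    have rel: "sc qq (g * E j) - E j * g
        = E (n + int l) * E (j + 1) - sc qq (E (j + 1) * E (n + int l))"
      using E_exchange[of j "n + int l + 1"] unfolding g_def by (simp add: algebra_simps)
    have X_Ej1: "X * E (j + 1) = sc (qq powi (j + 1 - (n - 1))) (E (j + 1) * X)"
      using assms False by (intro X_E) simp_all
    have X_Enl: "X * E (n + int l) = sc (qq powi (n + int l - (n - 1))) (E (n + int l) * X)"
      using assms by (intro X_E) simp_all
    have "qq powi (n + int l - (n - 1)) * qq powi (j + 1 - (n - 1))
        = qq powi (int (l + 2)) * qq powi (j - (n - 1))"
      by (simp add: qq_powi_mult algebra_simps)
    then have "qq powi (n + int l - (n - 1)) * qq powi (j + 1 - (n - 1))
        = qq ^ (l + 2) * qq powi (j - (n - 1))"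
      by (simp only: power_int_of_nat)
    then show ?thesis
      unfolding rel using skew_commute_mult[OF X_Enl X_Ej1] skew_commute_mult[OF X_Ej1 X_Enl]
      by (intro skew_commute_diff(1)) (simp_all add: mult.commute)
  qed
  have "qq powi (j - (n - 1)) = qq powi (j - n) * qq"
    using qq_powi_mult[of "j - n" 1] by (simp add: algebra_simps)
  moreover have "Y (Suc l) n = qcomm sc X g (qq ^ (l + 2))"
    unfolding X_def g_def by simp
  ultimately show ?thesis
    using qcomm_skew_commute_right[OF qq_nonzero X_E X_rel] assms by simp
qed

lemma Y_Suc_skew_commute_E_left:
  assumes "n + int l < j" and "j \<le> n + int l + 2"
  shows "Y (Suc l) n * E j = sc (qq powi (j - n)) (E j * Y (Suc l) n)"
proof -
  define X where "X = Y l (n + 1)"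
  define g where "g = E (n - int l - 1)"
  have X_E: "X * E i = sc (qq powi (i - (n + 1))) (E i * X)" if "n - int l \<le> i" "i \<le> n + int l + 2" for i
    unfolding X_def using that by (intro Y_l_skew_commute_E) simp
  have rel: "g * E j - sc qq (E j * g) = sc qq (E (n - int l) * E (j - 1)) - E (j - 1) * E (n - int l)"
    using E_exchange[of "n - int l - 1" j] unfolding g_def by (simp add: algebra_simps)
  have X_Enl: "X * E (n - int l) = sc (qq powi (n - int l - (n + 1))) (E (n - int l) * X)"
    using assms by (intro X_E) simp_all
  have X_Ej1: "X * E (j - 1) = sc (qq powi (j - 1 - (n + 1))) (E (j - 1) * X)"
    using assms by (intro X_E) simp_all
  have "qq ^ (l + 2) * (qq powi (n - int l - (n + 1)) * qq powi (j - 1 - (n + 1)))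
      = qq powi (int (l + 2)) * qq powi (n - int l - (n + 1) + (j - 1 - (n + 1)))"
    by (simp only: power_int_of_nat qq_powi_mult)
  also have "\<dots> = qq powi (j - (n + 1))"
    by (simp add: qq_powi_mult algebra_simps)
  finally have "sc (qq ^ (l + 2)) (X * (g * E j - sc qq (E j * g)))
      = sc (qq powi (j - (n + 1))) ((g * E j - sc qq (E j * g)) * X)"
    unfolding rel using skew_commute_mult[OF X_Enl X_Ej1] skew_commute_mult[OF X_Ej1 X_Enl]
    by (simp add: skew_commute_diff(2) mult.commute)
  moreover have "qq powi (j - n) = qq powi (j - (n + 1)) * qq"
    using qq_powi_mult[of "j - (n + 1)" 1] by (simp add: algebra_simps)
  moreover have "Y (Suc l) n = qcomm sc g X (qq ^ (l + 2))"
    unfolding X_def g_def by (rule Y_l_Suc_left)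
  ultimately show ?thesis
    using qcomm_skew_commute_left[OF X_E] assms by simp
qed

end

lemma Y_skew_commute_E_and_Y_Suc_left:
  "(\<forall>n j. \<bar>j - n\<bar> \<le> int l + 1 \<longrightarrow> Y l n * E j = sc (qq powi (j - n)) (E j * Y l n))
   \<and> (\<forall>n. Y (Suc l) n = qcomm sc (E (n - int l - 1)) (Y l (n + 1)) (qq ^ (l + 2)))"
proof (induction l)
  case 0
  have "Y 0 n * E j = sc (qq powi (j - n)) (E j * Y 0 n)" if "\<bar>j - n\<bar> \<le> int 0 + 1" for n j
    unfolding Y.simps(1) using that by (intro E_skew_commute_near) simp
  moreover have "Y (Suc 0) n = qcomm sc (E (n - int 0 - 1)) (Y 0 (n + 1)) (qq ^ (0 + 2))" for n
    by simp
  ultimately show ?case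
    by blast
next
  case (Suc l)
  have IH_E: "\<And>n j. \<bar>j - n\<bar> \<le> int l + 1 \<Longrightarrow> Y l n * E j = sc (qq powi (j - n)) (E j * Y l n)"
    and IH_left: "\<And>n. Y (Suc l) n = qcomm sc (E (n - int l - 1)) (Y l (n + 1)) (qq ^ (l + 2))"
    using Suc.IH by blast+
  have "Y (Suc l) n * E j = sc (qq powi (j - n)) (E j * Y (Suc l) n)"
    if "\<bar>j - n\<bar> \<le> int (Suc l) + 1" for n j
  proof (cases "j \<le> n + int l")
    case True
    then show ?thesis
      using that by (intro Y_Suc_skew_commute_E_right[OF IH_E IH_left]) simp_all
  next
    case False
    then show ?thesis
      using that by (intro Y_Suc_skew_commute_E_left[OF IH_E IH_left]) simp_all
  qed
  then show ?case
    using Y_Suc_Suc_left[OF IH_E IH_left] by blast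
qed

lemma Y_skew_commute_E:
  "\<bar>j - n\<bar> \<le> int l + 1 \<Longrightarrow> Y l n * E j = sc (qq powi (j - n)) (E j * Y l n)"
  using Y_skew_commute_E_and_Y_Suc_left by blast

lemma skew_commute_Y:
  assumes X_E: "\<And>j. \<bar>j - n\<bar> \<le> int k + 1 \<Longrightarrow> X * E j = sc (qq powi (j - n)) (E j * X)"
    and "n - int k - 1 \<le> m - int l" and "m + int l \<le> n + int k + 1"
  shows "X * Y l m = sc (qq powi (int (l + 1) * (m - n))) (Y l m * X)"
  using assms(2,3)
proof (induction l arbitrary: m)
  case 0
  then show ?case
    using X_E[of m] by simp
next
  case (Suc l)
  have "X * Y l (m - 1) = sc (qq powi (int (l + 1) * (m - 1 - n))) (Y l (m - 1) * X)"
    using Suc by simp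
  moreover have "X * E (m + int l + 1) = sc (qq powi (m + int l + 1 - n)) (E (m + int l + 1) * X)"
    using Suc.prems by (intro X_E) simp
  moreover have "qq powi (int (l + 1) * (m - 1 - n)) * qq powi (m + int l + 1 - n)
      = qq powi (int (Suc l + 1) * (m - n))"
    by (simp add: qq_powi_mult algebra_simps)
  ultimately show ?case
    using skew_commute_qcomm by fastforce
qed

lemma Y_skew_commute_Y:
  assumes "\<epsilon> \<in> {0, 1::nat}"
  shows "Y a n * Y b (n + int \<epsilon>) = sc (qq ^ (min (Suc a) (Suc b) * \<epsilon>)) (Y b (n + int \<epsilon>) * Y a n)"
proof (cases "b \<le> a")
  case True
  have "Y a n * Y b (n + int \<epsilon>) = sc (qq powi (int (b + 1) * (n + int \<epsilon> - n))) (Y b (n + int \<epsilon>) * Y a n)"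
    using assms True by (intro skew_commute_Y[of n a]) (auto intro: Y_skew_commute_E)
  moreover have "int (b + 1) * (n + int \<epsilon> - n) = int (min (Suc a) (Suc b) * \<epsilon>)"
    using True by (simp add: algebra_simps)
  ultimately show ?thesis
    by (simp only: power_int_of_nat)
next
  case False
  have "Y b (n + int \<epsilon>) * Y a n
      = sc (qq powi (int (a + 1) * (n - (n + int \<epsilon>)))) (Y a n * Y b (n + int \<epsilon>))"
    using assms False by (intro skew_commute_Y[of "n + int \<epsilon>" b]) (auto intro: Y_skew_commute_E)
  then have "sc (qq powi (int (a + 1) * int \<epsilon>)) (Y b (n + int \<epsilon>) * Y a n) = Y a n * Y b (n + int \<epsilon>)"
    using qq_powi_mult[of "int (a + 1) * int \<epsilon>" "int (a + 1) * (- int \<epsilon>)"] by simp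
  moreover have "int (a + 1) * int \<epsilon> = int (min (Suc a) (Suc b) * \<epsilon>)"
    using False by (simp add: algebra_simps)
  ultimately show ?thesis
    by (simp only: power_int_of_nat)
qed

end

theorem proposition6p5:
  fixes sc :: "Cq \<Rightarrow> 'a::ring_1 \<Rightarrow> 'a" and e :: "int \<Rightarrow> 'a"
    and \<alpha> \<beta> :: nat and n :: int and \<epsilon> :: nat
  assumes "Cq_algebra sc" and "loop_rel sc e" and "\<epsilon> \<in> {0, 1}"
  shows "M sc e \<alpha> n * M sc e \<beta> (n + int \<epsilon>)
       = sc (qq ^ (min \<alpha> \<beta> * \<epsilon>)) (M sc e \<beta> (n + int \<epsilon>) * M sc e \<alpha> n)"
proof -
  interpret loop_algebra sc e
    using assms(1,2) by (simp add: loop_algebra_def loop_algebra_axioms_def Cq_alg_def)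
  show ?thesis
  proof (cases "\<alpha> = 0 \<or> \<beta> = 0")
    case True
    then show ?thesis
      by (auto simp: M_def)
  next
    case False
    then obtain a b where "\<alpha> = Suc a" and "\<beta> = Suc b"
      by (meson not0_implies_Suc)
    then show ?thesis
      using Y_skew_commute_Y[OF assms(3), of a n b] by (simp add: M_Suc_eq_scale_Y mult_ac)
  qed
qed

end
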